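(* Let $(M,I,J,K)$ be a hypercomplex manifold of complex dimension $2n$ (with respect to $I$), and let $\alpha$ be a nonnegative real $(1,1)$-form on $M$. Then \[ \big(\alpha-\alpha(\cdot J,\cdot J)\big)^{2n}\ \ge\ \alpha^{2n} \] as top-degree forms (i.e. the difference is a nonnegative multiple of the volume form for the orientation induced by $I$).
   Context: A hypercomplex manifold $(M,I,J,K)$ is a manifold with three integrable complex structures satisfying $IJK=-\mathrm{id}_{TM}$; endomorphisms act on tangent vectors from the right (written $XJ$). Types $(p,q)$ are with respect to $I$. A real $(1,1)$-form $\alpha$ is nonnegative if $\alpha(Z,\bar Z)\ge0$ in the usual sense of positivity of real $(1,1)$-forms (equivalently $-\sqrt{-1}\,\alpha(Z,\bar Z)\ge 0$ under the standard convention, i.e. $\alpha$ is a semipositive $(1,1)$-form) for all $(1,0)$-vectors $Z$. The form $\alpha(\cdot J,\cdot J)$ denotes $(X,Y)\mapsto\alpha(XJ,YJ)$. *)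

theory Defs
  imports "HOL-Analysis.Analysis" "HOL-Combinatorics.Permutations"
begin

text \<open>Pointwise (linear-algebra) setting: a tangent space is modelled by a finite-dimensional
real vector space 'v. Endomorphisms acting from the right, X J, are written as J X;
thus (X I) J = J (I X).\<close>

text \<open>A hypercomplex structure on a real vector space: three complex structures with IJK = -id
(right action: X I J K = - X, i.e. K (J (I X)) = - X).\<close>
definition hypercomplex_structure :: "('v::real_vector \<Rightarrow> 'v) \<Rightarrow> ('v \<Rightarrow> 'v) \<Rightarrow> ('v \<Rightarrow> 'v) \<Rightarrow> bool" where
  "hypercomplex_structure I J K \<longleftrightarrow>
     linear I \<and> linear J \<and> linear K \<and>
     (\<forall>x. I (I x) = - x) \<and> (\<forall>x. J (J x) = - x) \<and> (\<forall>x. K (K x) = - x) \<and>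
     (\<forall>x. K (J (I x)) = - x)"

definition two_form :: "('v::real_vector \<Rightarrow> 'v \<Rightarrow> real) \<Rightarrow> bool" where
  "two_form \<alpha> \<longleftrightarrow> bilinear \<alpha> \<and> (\<forall>x y. \<alpha> y x = - \<alpha> x y)"

definition real_11_form :: "('v::real_vector \<Rightarrow> 'v) \<Rightarrow> ('v \<Rightarrow> 'v \<Rightarrow> real) \<Rightarrow> bool" where
  "real_11_form I \<alpha> \<longleftrightarrow> two_form \<alpha> \<and> (\<forall>x y. \<alpha> (I x) (I y) = \<alpha> x y)"

text \<open>Nonnegativity: for Z = X - i XI of type (1,0), -i alpha(Z, conj Z) = 2 alpha(X, XI).\<close>
definition nonneg_11_form :: "('v::real_vector \<Rightarrow> 'v) \<Rightarrow> ('v \<Rightarrow> 'v \<Rightarrow> real) \<Rightarrow> bool" where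
  "nonneg_11_form I \<alpha> \<longleftrightarrow> real_11_form I \<alpha> \<and> (\<forall>x. \<alpha> x (I x) \<ge> 0)"

text \<open>The m-th wedge power of a 2-form, evaluated on the vectors v 0, ..., v (2m-1):
  alpha^m (v_0,...,v_{2m-1}) = (1/2^m) sum over sigma in S_{2m} of sgn(sigma) prod_i alpha(v_{sigma(2i)}, v_{sigma(2i+1)})
  (standard convention (a wedge b) = (k+l)!/(k! l!) Alt(a tensor b)).\<close>
definition wedge_pow :: "('v \<Rightarrow> 'v \<Rightarrow> real) \<Rightarrow> nat \<Rightarrow> (nat \<Rightarrow> 'v) \<Rightarrow> real" where
  "wedge_pow \<alpha> m v =
     (\<Sum>\<sigma>\<in>{\<sigma>. \<sigma> permutes {..<2*m}}.
        of_int (sign \<sigma>) * (\<Prod>i<m. \<alpha> (v (\<sigma> (2*i))) (v (\<sigma> (2*i+1))))) / 2 ^ m"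

text \<open>The real frame (v_0, v_0 I, v_1, v_1 I, ...) built from vectors v_j; for C-linearly
independent v_0..v_{N-1} these are exactly the positively oriented real bases for the
orientation induced by I (and for dependent ones every top form vanishes on them).\<close>
definition complex_frame :: "('v \<Rightarrow> 'v) \<Rightarrow> (nat \<Rightarrow> 'v) \<Rightarrow> nat \<Rightarrow> 'v" where
  "complex_frame I v k = (if even k then v (k div 2) else I (v (k div 2)))"

text \<open>Comparison of top-degree forms w.r.t. the orientation induced by I:
  omega \<ge> eta iff omega - eta is a nonnegative multiple of a positive volume form,
  i.e. omega - eta is nonnegative on every I-complex frame.\<close>
definition top_form_ge :: "('v \<Rightarrow> 'v) \<Rightarrow> ((nat \<Rightarrow> 'v) \<Rightarrow> real) \<Rightarrow> ((nat \<Rightarrow> 'v) \<Rightarrow> real) \<Rightarrow> bool" where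
  "top_form_ge I \<omega> \<eta> \<longleftrightarrow> (\<forall>v. \<omega> (complex_frame I v) - \<eta> (complex_frame I v) \<ge> 0)"

end

theory Submission
  imports Defs
begin

text \<open>Because J anticommutes with I, the form \<open>-\<alpha>(\<cdot>J, \<cdot>J)\<close> is again a nonnegative
(1,1)-form, so it suffices that top powers are monotone: \<open>\<alpha>^m \<le> (\<alpha> + \<gamma>)^m\<close> on every complex
frame \<open>(v_0, v_0 I, ..., v_(m-1), v_(m-1) I)\<close> for nonnegative \<open>\<alpha>\<close> and \<open>\<gamma>\<close>. This goes by
induction on m, expanding along the last vector \<open>e = v_(m-1)\<close>. If \<open>\<alpha>(e, e I) = 0\<close>, then \<open>e\<close>
lies in the kernel of \<open>\<alpha>\<close> and \<open>\<alpha>^m\<close> vanishes. Otherwise let \<open>p\<close> be the \<open>\<alpha>\<close>-orthogonal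
projection along \<open>span {e, e I}\<close>. Shearing the other vectors along \<open>e\<close> and \<open>e I\<close> does not
change an alternating form, and once the last pair is \<open>\<alpha>\<close>-orthogonal to the rest,
\<open>\<alpha>^m = m \<alpha>(e, e I) (\<alpha> \<circ> p)^(m-1)\<close>. The Schur complement \<open>\<alpha> \<circ> p\<close> is dominated by \<open>\<alpha>\<close>,
hence by \<open>\<alpha> + \<gamma>\<close>, so the induction hypothesis compares \<open>(\<alpha> \<circ> p)^(m-1)\<close> with
\<open>(\<alpha> + \<gamma>)^(m-1)\<close> on the frame projected along \<open>\<alpha> + \<gamma>\<close>.\<close>

section \<open>Wedge powers as sums over permutations\<close>

lemma permutes_pair_preimage:
  assumes "\<sigma> permutes {..<2*m}" "k < 2*m"
  obtains i where "i < m" "\<sigma> (2*i) = k \<or> \<sigma> (Suc (2*i)) = k"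
proof -
  define p where "p = inv \<sigma> k"
  have "\<sigma> p = k" "p < 2*m"
    using assms permutes_inverses(1) permutes_inv permutes_in_image unfolding p_def by fastforce+
  moreover have "p = 2 * (p div 2) \<or> p = Suc (2 * (p div 2))"
    by presburger
  ultimately show thesis
    by (intro that[of "p div 2"]) auto
qed

lemma inj_pair_unique:
  assumes "inj \<sigma>" "{\<sigma> (2*i), \<sigma> (Suc (2*i))} = {a, b}" "{\<sigma> (2*j), \<sigma> (Suc (2*j))} = {a, b}"
  shows "i = j"
  using assms by (auto simp: doubleton_eq_iff inj_eq)

definition wedge_term :: "('v \<Rightarrow> 'v \<Rightarrow> real) \<Rightarrow> nat \<Rightarrow> (nat \<Rightarrow> 'v) \<Rightarrow> (nat \<Rightarrow> nat) \<Rightarrow> real" where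
  "wedge_term \<omega> m u \<sigma> = of_int (sign \<sigma>) * (\<Prod>i<m. \<omega> (u (\<sigma> (2*i))) (u (\<sigma> (Suc (2*i)))))"

lemma wedge_pow_eq_sum_wedge_term:
  "wedge_pow \<omega> m u = (\<Sum>\<sigma> | \<sigma> permutes {..<2*m}. wedge_term \<omega> m u \<sigma>) / 2 ^ m"
  unfolding wedge_pow_def wedge_term_def by simp

lemma wedge_pow_0 [simp]: "wedge_pow \<omega> 0 u = 1"
  unfolding wedge_pow_def by simp

lemma wedge_term_upd_lincomb:
  assumes \<omega>: "bilinear \<omega>" and \<sigma>: "\<sigma> permutes {..<2*m}" and k: "k < 2*m"
  shows "wedge_term \<omega> m (u(k := x + c *\<^sub>R y)) \<sigma>
       = wedge_term \<omega> m (u(k := x)) \<sigma> + c * wedge_term \<omega> m (u(k := y)) \<sigma>"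
proof -
  obtain i0 where i0: "i0 < m" "\<sigma> (2*i0) = k \<or> \<sigma> (Suc (2*i0)) = k"
    using permutes_pair_preimage[OF \<sigma> k] .
  have inj: "\<sigma> a = \<sigma> b \<longleftrightarrow> a = b" for a b
    using permutes_inj[OF \<sigma>] by (simp add: inj_eq)
  define F where "F z i = \<omega> ((u(k := z)) (\<sigma> (2*i))) ((u(k := z)) (\<sigma> (Suc (2*i))))" for z i
  have F_i0: "F (x + c *\<^sub>R y) i0 = F x i0 + c * F y i0"
    using i0(2) inj[of "2*i0" "Suc (2*i0)"]
    by (auto simp: F_def bilinear_ladd[OF \<omega>] bilinear_radd[OF \<omega>] bilinear_lmul[OF \<omega>] bilinear_rmul[OF \<omega>])
  have "\<sigma> (2*i) \<noteq> k \<and> \<sigma> (Suc (2*i)) \<noteq> k" if "i \<noteq> i0" for i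
  proof -
    have "2*i \<noteq> 2*i0" "2*i \<noteq> Suc (2*i0)" "Suc (2*i) \<noteq> 2*i0" "Suc (2*i) \<noteq> Suc (2*i0)"
      using that by presburger+
    then show ?thesis
      using i0(2) inj by metis
  qed
  then have F_other: "F z i = F x i" if "i \<noteq> i0" for z i
    using that by (simp add: F_def)
  have "wedge_term \<omega> m (u(k := z)) \<sigma> = of_int (sign \<sigma>) * (F z i0 * (\<Prod>i\<in>{..<m} - {i0}. F x i))" for z
  proof -
    have "wedge_term \<omega> m (u(k := z)) \<sigma> = of_int (sign \<sigma>) * (\<Prod>i<m. F z i)"
      by (simp add: wedge_term_def F_def)
    also have "(\<Prod>i<m. F z i) = F z i0 * (\<Prod>i\<in>{..<m} - {i0}. F z i)"
      using i0(1) by (simp add: prod.remove)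
    also have "(\<Prod>i\<in>{..<m} - {i0}. F z i) = (\<Prod>i\<in>{..<m} - {i0}. F x i)"
      by (intro prod.cong refl F_other) blast
    finally show ?thesis .
  qed
  then show ?thesis
    using F_i0 by (simp add: algebra_simps)
qed

lemma wedge_pow_upd_lincomb:
  assumes "bilinear \<omega>" "k < 2*m"
  shows "wedge_pow \<omega> m (u(k := x + c *\<^sub>R y)) = wedge_pow \<omega> m (u(k := x)) + c * wedge_pow \<omega> m (u(k := y))"
  unfolding wedge_pow_eq_sum_wedge_term using wedge_term_upd_lincomb[OF assms(1) _ assms(2)]
  by (simp add: sum.distrib sum_distrib_left add_divide_distrib)

lemma wedge_pow_eq_0_if_repeated:
  assumes jk: "j \<noteq> k" "j < 2*m" "k < 2*m" and "u j = u k"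
  shows "wedge_pow \<omega> m u = 0"
proof -
  let ?S = "{\<sigma>. \<sigma> permutes {..<2*m}}" and ?\<tau> = "Transposition.transpose j k"
  have \<tau>: "?\<tau> permutes {..<2*m}"
    using jk by (simp add: permutes_swap_id)
  have "u (?\<tau> i) = u i" for i
    using \<open>u j = u k\<close> by (simp add: Transposition.transpose_def)
  then have "wedge_term \<omega> m u (?\<tau> \<circ> \<sigma>) = - wedge_term \<omega> m u \<sigma>" if "\<sigma> \<in> ?S" for \<sigma>
    using jk permutes_imp_permutation[OF finite_lessThan that[simplified]]
    by (simp add: wedge_term_def sign_compose permutation_swap_id sign_swap_id)
  then have "(\<Sum>\<sigma>\<in>?S. wedge_term \<omega> m u \<sigma>) = - (\<Sum>\<sigma>\<in>?S. wedge_term \<omega> m u \<sigma>)"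
    using setum_permutations_compose_left[OF \<tau>, of "wedge_term \<omega> m u"] by (simp add: sum_negf)
  then show ?thesis
    unfolding wedge_pow_eq_sum_wedge_term by simp
qed

lemma wedge_pow_cong:
  assumes "\<And>j. j < 2*m \<Longrightarrow> u j = u' j"
  shows "wedge_pow \<omega> m u = wedge_pow \<omega> m u'"
proof -
  have "wedge_term \<omega> m u \<sigma> = wedge_term \<omega> m u' \<sigma>" if "\<sigma> permutes {..<2*m}" for \<sigma>
    using assms permutes_in_image[OF that] unfolding wedge_term_def
    by (intro arg_cong2[where f="(*)"] refl prod.cong) auto
  then show ?thesis
    unfolding wedge_pow_eq_sum_wedge_term by simp
qed

lemma wedge_pow_add_last_pair:
  assumes \<omega>: "bilinear \<omega>" and "finite S" "S \<subseteq> {..<2*m}"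
  shows "wedge_pow \<omega> (Suc m) (\<lambda>j. if j \<in> S then u j + c j *\<^sub>R u (2*m) + d j *\<^sub>R u (Suc (2*m)) else u j)
       = wedge_pow \<omega> (Suc m) u"
  using assms(2,3)
proof (induction S rule: finite_induct)
  case empty
  then show ?case by simp
next
  case (insert k S)
  define v where "v = (\<lambda>j. if j \<in> S then u j + c j *\<^sub>R u (2*m) + d j *\<^sub>R u (Suc (2*m)) else u j)"
  have k: "k < 2 * Suc m" "k \<noteq> 2*m" "k \<noteq> Suc (2*m)"
    using insert by auto
  have v_last: "v (2*m) = u (2*m)" "v (Suc (2*m)) = u (Suc (2*m))" "v k = u k"
    using insert by (auto simp: v_def)
  have "(\<lambda>j. if j \<in> insert k S then u j + c j *\<^sub>R u (2*m) + d j *\<^sub>R u (Suc (2*m)) else u j)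
      = v(k := (v k + c k *\<^sub>R v (2*m)) + d k *\<^sub>R v (Suc (2*m)))"
    using v_last by (auto simp: v_def fun_eq_iff)
  moreover have "wedge_pow \<omega> (Suc m) (v(k := (v k + c k *\<^sub>R v (2*m)) + d k *\<^sub>R v (Suc (2*m))))
      = wedge_pow \<omega> (Suc m) v"
    using wedge_pow_upd_lincomb[OF \<omega> k(1)]
      wedge_pow_eq_0_if_repeated[of k "2*m" "Suc m" "v(k := v (2*m))"]
      wedge_pow_eq_0_if_repeated[of k "Suc (2*m)" "Suc m" "v(k := v (Suc (2*m)))"] k
    by simp
  moreover have "wedge_pow \<omega> (Suc m) v = wedge_pow \<omega> (Suc m) u"
    using insert by (simp add: v_def)
  ultimately show ?case
    by simp
qed

definition swap_pairs :: "nat \<Rightarrow> nat \<Rightarrow> nat \<Rightarrow> nat" where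
  "swap_pairs i m = Transposition.transpose (2*i) (2*m) \<circ> Transposition.transpose (Suc (2*i)) (Suc (2*m))"

lemma swap_pairs_permutes: "i \<le> m \<Longrightarrow> swap_pairs i m permutes {..<2 * Suc m}"
  unfolding swap_pairs_def by (intro permutes_compose permutes_swap_id) auto

lemma sign_swap_pairs: "sign (swap_pairs i m) = 1"
  unfolding swap_pairs_def by (simp add: sign_compose permutation_swap_id sign_swap_id)

lemma swap_pairs_apply:
  "swap_pairs i m (2*j) = 2 * Transposition.transpose i m j"
  "swap_pairs i m (Suc (2*j)) = Suc (2 * Transposition.transpose i m j)"
  unfolding swap_pairs_def by (auto simp: Transposition.transpose_def)

lemma wedge_term_comp_swap_pairs:
  assumes \<sigma>: "\<sigma> permutes {..<2 * Suc m}" and "i \<le> m"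
  shows "wedge_term \<omega> (Suc m) u (\<sigma> \<circ> swap_pairs i m) = wedge_term \<omega> (Suc m) u \<sigma>"
proof -
  let ?f = "\<lambda>j. \<omega> (u (\<sigma> (2*j))) (u (\<sigma> (Suc (2*j))))"
  have "sign (\<sigma> \<circ> swap_pairs i m) = sign \<sigma>"
    using permutes_imp_permutation[OF _ \<sigma>] permutes_imp_permutation[OF _ swap_pairs_permutes[OF \<open>i \<le> m\<close>]]
    by (simp add: sign_compose sign_swap_pairs)
  moreover have "(\<Prod>j<Suc m. ?f (Transposition.transpose i m j)) = (\<Prod>j<Suc m. ?f j)"
    using prod.permute[OF permutes_swap_id[of i "{..<Suc m}" m], of ?f] \<open>i \<le> m\<close> by (simp add: comp_def)
  ultimately show ?thesis
    by (simp add: wedge_term_def swap_pairs_apply)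
qed

lemma wedge_term_comp_swap_last:
  assumes \<sigma>: "\<sigma> permutes {..<2 * Suc m}" and anti: "\<And>x y. \<omega> y x = - \<omega> x y"
  shows "wedge_term \<omega> (Suc m) u (\<sigma> \<circ> Transposition.transpose (2*m) (Suc (2*m))) = wedge_term \<omega> (Suc m) u \<sigma>"
proof -
  let ?\<tau> = "Transposition.transpose (2*m) (Suc (2*m))"
  let ?f = "\<lambda>\<pi> j. \<omega> (u (\<pi> (2*j))) (u (\<pi> (Suc (2*j))))"
  have "sign (\<sigma> \<circ> ?\<tau>) = - sign \<sigma>"
    using permutes_imp_permutation[OF _ \<sigma>] by (simp add: sign_compose permutation_swap_id sign_swap_id)
  moreover have "?f (\<sigma> \<circ> ?\<tau>) m = - ?f \<sigma> m"
    using anti[of "u (\<sigma> (2*m))"] by simp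
  moreover have "(\<Prod>j<m. ?f (\<sigma> \<circ> ?\<tau>) j) = (\<Prod>j<m. ?f \<sigma> j)"
    by (intro prod.cong refl) (auto simp: Transposition.transpose_def)
  ultimately show ?thesis
    unfolding wedge_term_def by simp
qed

text \<open>When \<open>u (2m)\<close> is \<open>\<omega>\<close>-orthogonal to \<open>u 0, \<dots>, u (2m-1)\<close>, a nonzero term pairs slot \<open>2m\<close>
with slot \<open>2m+1\<close>; composing with \<open>swap_pairs i m\<close> and the last transposition moves that pair to
the end, so the sum over all permutations becomes \<open>2(m+1)\<close> copies of the sum over those fixing
the last pair.\<close>

definition wedge_term_fixing_last :: "('v \<Rightarrow> 'v \<Rightarrow> real) \<Rightarrow> nat \<Rightarrow> (nat \<Rightarrow> 'v) \<Rightarrow> (nat \<Rightarrow> nat) \<Rightarrow> real" where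
  "wedge_term_fixing_last \<omega> m u \<tau> =
     (if \<tau> (2*m) = 2*m \<and> \<tau> (Suc (2*m)) = Suc (2*m) then wedge_term \<omega> (Suc m) u \<tau> else 0)"

lemma wedge_term_fixing_last_comp_swap_pairs:
  assumes \<sigma>: "\<sigma> permutes {..<2 * Suc m}" and "i \<le> m" and anti: "\<And>x y. \<omega> y x = - \<omega> x y"
  shows "wedge_term_fixing_last \<omega> m u (\<sigma> \<circ> swap_pairs i m)
       + wedge_term_fixing_last \<omega> m u (\<sigma> \<circ> swap_pairs i m \<circ> Transposition.transpose (2*m) (Suc (2*m)))
     = (if {\<sigma> (2*i), \<sigma> (Suc (2*i))} = {2*m, Suc (2*m)} then wedge_term \<omega> (Suc m) u \<sigma> else 0)"
proof -
  have \<rho>: "\<sigma> \<circ> swap_pairs i m permutes {..<2 * Suc m}"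
    using \<sigma> swap_pairs_permutes[OF \<open>i \<le> m\<close>] by (rule permutes_compose[rotated])
  have "swap_pairs i m (2*m) = 2*i" "swap_pairs i m (Suc (2*m)) = Suc (2*i)"
    using swap_pairs_apply[of i m m] by simp_all
  then show ?thesis
    using wedge_term_comp_swap_last[where \<omega> = \<omega>, OF \<rho> anti] wedge_term_comp_swap_pairs[OF \<sigma> \<open>i \<le> m\<close>]
    by (auto simp: wedge_term_fixing_last_def doubleton_eq_iff Transposition.transpose_def)
qed

lemma wedge_term_eq_0_unless_last_pair:
  assumes \<sigma>: "\<sigma> permutes {..<2 * Suc m}" and anti: "\<And>x y. \<omega> y x = - \<omega> x y"
    and orth: "\<And>j. j < 2*m \<Longrightarrow> \<omega> (u (2*m)) (u j) = 0"
    and no_last_pair: "\<And>i. i < Suc m \<Longrightarrow> {\<sigma> (2*i), \<sigma> (Suc (2*i))} \<noteq> {2*m, Suc (2*m)}"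
  shows "wedge_term \<omega> (Suc m) u \<sigma> = 0"
proof -
  obtain i where i: "i < Suc m" "\<sigma> (2*i) = 2*m \<or> \<sigma> (Suc (2*i)) = 2*m"
    using permutes_pair_preimage[OF \<sigma>, of "2*m"] by auto
  have inj: "\<sigma> a = \<sigma> b \<longleftrightarrow> a = b" for a b
    using permutes_inj[OF \<sigma>] by (simp add: inj_eq)
  have "\<sigma> (2*i) < 2 * Suc m" "\<sigma> (Suc (2*i)) < 2 * Suc m"
    using i(1) permutes_in_image[OF \<sigma>] by auto
  moreover have "\<sigma> (2*i) \<noteq> \<sigma> (Suc (2*i))"
    using inj by simp
  moreover note no_last_pair[OF i(1)] i(2)
  ultimately have "\<sigma> (2*i) = 2*m \<and> \<sigma> (Suc (2*i)) < 2*m \<or> \<sigma> (Suc (2*i)) = 2*m \<and> \<sigma> (2*i) < 2*m"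
    by (auto simp: doubleton_eq_iff)
  then have "\<omega> (u (\<sigma> (2*i))) (u (\<sigma> (Suc (2*i)))) = 0"
    using orth anti by (metis neg_equal_0_iff_equal)
  then have "(\<Prod>j<Suc m. \<omega> (u (\<sigma> (2*j))) (u (\<sigma> (Suc (2*j))))) = 0"
    using i(1) by (intro prod_zero) auto
  then show ?thesis
    unfolding wedge_term_def by simp
qed

lemma wedge_term_eq_sum_fixing_last:
  assumes \<sigma>: "\<sigma> permutes {..<2 * Suc m}" and anti: "\<And>x y. \<omega> y x = - \<omega> x y"
    and orth: "\<And>j. j < 2*m \<Longrightarrow> \<omega> (u (2*m)) (u j) = 0"
  shows "wedge_term \<omega> (Suc m) u \<sigma>
       = (\<Sum>i<Suc m. wedge_term_fixing_last \<omega> m u (\<sigma> \<circ> swap_pairs i m)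
           + wedge_term_fixing_last \<omega> m u (\<sigma> \<circ> swap_pairs i m \<circ> Transposition.transpose (2*m) (Suc (2*m))))"
proof -
  let ?P = "\<lambda>i. {\<sigma> (2*i), \<sigma> (Suc (2*i))} = {2*m, Suc (2*m)}"
  let ?w = "wedge_term \<omega> (Suc m) u \<sigma>"
  have "(\<Sum>i<Suc m. wedge_term_fixing_last \<omega> m u (\<sigma> \<circ> swap_pairs i m)
           + wedge_term_fixing_last \<omega> m u (\<sigma> \<circ> swap_pairs i m \<circ> Transposition.transpose (2*m) (Suc (2*m))))
      = (\<Sum>i<Suc m. if ?P i then ?w else 0)"
    using wedge_term_fixing_last_comp_swap_pairs[where \<omega> = \<omega>, OF \<sigma> _ anti] by (intro sum.cong) auto
  also have "\<dots> = ?w"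
  proof (cases "\<exists>i<Suc m. ?P i")
    case True
    then obtain i0 where "i0 < Suc m" "?P i0"
      by blast
    moreover have "?P i \<longleftrightarrow> i = i0" for i
      using inj_pair_unique[OF permutes_inj[OF \<sigma>] _ \<open>?P i0\<close>] \<open>?P i0\<close> by blast
    ultimately show ?thesis
      by simp
  next
    case False
    then show ?thesis
      using wedge_term_eq_0_unless_last_pair[where \<omega> = \<omega> and u = u, OF \<sigma> anti orth] by simp
  qed
  finally show ?thesis ..
qed

lemma permutes_fixing_last_pair_iff:
  "\<sigma> permutes {..<2 * Suc m} \<and> \<sigma> (2*m) = 2*m \<and> \<sigma> (Suc (2*m)) = Suc (2*m) \<longleftrightarrow> \<sigma> permutes {..<2*m}"
proof
  assume *: "\<sigma> permutes {..<2 * Suc m} \<and> \<sigma> (2*m) = 2*m \<and> \<sigma> (Suc (2*m)) = Suc (2*m)"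
  then have "\<sigma> x = x" if "x \<notin> {..<2*m}" for x
    using that permutes_not_in[of \<sigma> "{..<2 * Suc m}" x] by (cases "x = 2*m \<or> x = Suc (2*m)") auto
  with * show "\<sigma> permutes {..<2*m}"
    unfolding permutes_def by blast
qed (auto intro: permutes_subset permutes_not_in)

lemma wedge_pow_Suc_orth_last:
  assumes anti: "\<And>x y. \<omega> y x = - \<omega> x y" and orth: "\<And>j. j < 2*m \<Longrightarrow> \<omega> (u (2*m)) (u j) = 0"
  shows "wedge_pow \<omega> (Suc m) u = real (Suc m) * \<omega> (u (2*m)) (u (Suc (2*m))) * wedge_pow \<omega> m u"
proof -
  let ?S = "{\<sigma>. \<sigma> permutes {..<2 * Suc m}}" and ?S' = "{\<sigma>. \<sigma> permutes {..<2*m}}"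
  let ?\<tau> = "Transposition.transpose (2*m) (Suc (2*m))" and ?g = "wedge_term_fixing_last \<omega> m u"
  have sum_comp: "(\<Sum>\<sigma>\<in>?S. ?g (\<sigma> \<circ> \<pi>)) = (\<Sum>\<sigma>\<in>?S. ?g \<sigma>)" if "\<pi> permutes {..<2 * Suc m}" for \<pi>
    using sum_permutations_compose_right[OF that, of ?g] by simp
  have \<tau>: "?\<tau> permutes {..<2 * Suc m}"
    by (intro permutes_swap_id) auto
  have "(\<Sum>\<sigma>\<in>?S. wedge_term \<omega> (Suc m) u \<sigma>)
      = (\<Sum>\<sigma>\<in>?S. \<Sum>i<Suc m. ?g (\<sigma> \<circ> swap_pairs i m) + ?g (\<sigma> \<circ> (swap_pairs i m \<circ> ?\<tau>)))"
    using wedge_term_eq_sum_fixing_last[where \<omega> = \<omega> and u = u, OF _ anti orth]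
    by (intro sum.cong refl) (simp add: o_assoc)
  also have "\<dots> = (\<Sum>i<Suc m. (\<Sum>\<sigma>\<in>?S. ?g (\<sigma> \<circ> swap_pairs i m)) + (\<Sum>\<sigma>\<in>?S. ?g (\<sigma> \<circ> (swap_pairs i m \<circ> ?\<tau>))))"
    by (simp only: sum.distrib sum.swap[where B = "{..<Suc m}"])
  also have "\<dots> = (\<Sum>i<Suc m. 2 * (\<Sum>\<sigma>\<in>?S. ?g \<sigma>))"
    using sum_comp swap_pairs_permutes permutes_compose[OF \<tau>] by (intro sum.cong) auto
  also have "(\<Sum>\<sigma>\<in>?S. ?g \<sigma>) = (\<Sum>\<sigma>\<in>?S'. wedge_term \<omega> (Suc m) u \<sigma>)"
    unfolding wedge_term_fixing_last_def
    by (simp add: sum.inter_filter[symmetric] finite_permutations permutes_fixing_last_pair_iff[symmetric] conj_assoc)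
  also have "\<dots> = (\<Sum>\<sigma>\<in>?S'. \<omega> (u (2*m)) (u (Suc (2*m))) * wedge_term \<omega> m u \<sigma>)"
    by (intro sum.cong refl) (simp add: wedge_term_def permutes_not_in)
  also have "(\<Sum>i<Suc m. 2 * (\<Sum>\<sigma>\<in>?S'. \<omega> (u (2*m)) (u (Suc (2*m))) * wedge_term \<omega> m u \<sigma>))
      = 2 * real (Suc m) * \<omega> (u (2*m)) (u (Suc (2*m))) * (\<Sum>\<sigma>\<in>?S'. wedge_term \<omega> m u \<sigma>)"
    by (simp add: sum_distrib_left[symmetric])
  finally show ?thesis
    unfolding wedge_pow_eq_sum_wedge_term by (simp add: field_simps)
qed

lemma complex_frame_comp:
  assumes "\<And>y. p (I y) = I (p y)"
  shows "complex_frame I (p \<circ> w) k = p (complex_frame I w k)"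
  using assms unfolding complex_frame_def by simp

lemma wedge_pow_pullback_complex_frame:
  assumes "\<And>y. p (I y) = I (p y)"
  shows "wedge_pow (\<lambda>x y. \<alpha> (p x) (p y)) m (complex_frame I w) = wedge_pow \<alpha> m (complex_frame I (p \<circ> w))"
  unfolding wedge_pow_def using assms by (simp add: complex_frame_comp)

lemma complex_frame_last [simp]:
  "complex_frame I w (2*m) = w m" "complex_frame I w (Suc (2*m)) = I (w m)"
  unfolding complex_frame_def by simp_all

lemma complex_frame_upd_below:
  "j < 2*m \<Longrightarrow> complex_frame I (w(m := e)) j = complex_frame I w j"
  unfolding complex_frame_def by auto

lemma wedge_pow_complex_frame_shear:
  assumes \<omega>: "bilinear \<omega>" and p_I: "\<And>y. p (I y) = I (p y)"
    and p: "\<And>y. p y = y + c y *\<^sub>R e + d y *\<^sub>R I e"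
  shows "wedge_pow \<omega> (Suc m) (complex_frame I ((p \<circ> w)(m := e)))
       = wedge_pow \<omega> (Suc m) (complex_frame I (w(m := e)))"
proof -
  let ?u = "complex_frame I (w(m := e))"
  have "wedge_pow \<omega> (Suc m) (complex_frame I ((p \<circ> w)(m := e)))
      = wedge_pow \<omega> (Suc m) (\<lambda>j. if j \<in> {..<2*m} then ?u j + c (?u j) *\<^sub>R ?u (2*m) + d (?u j) *\<^sub>R ?u (Suc (2*m)) else ?u j)"
  proof (rule wedge_pow_cong)
    fix j assume "j < 2 * Suc m"
    then consider "j < 2*m" | "j = 2*m" | "j = Suc (2*m)"
      by (simp only: mult_Suc_right) linarith
    then show "complex_frame I ((p \<circ> w)(m := e)) j
        = (if j \<in> {..<2*m} then ?u j + c (?u j) *\<^sub>R ?u (2*m) + d (?u j) *\<^sub>R ?u (Suc (2*m)) else ?u j)"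
      by cases (simp_all add: complex_frame_upd_below complex_frame_comp p_I p[symmetric])
  qed
  also have "\<dots> = wedge_pow \<omega> (Suc m) ?u"
    by (rule wedge_pow_add_last_pair[OF \<omega>]) auto
  finally show ?thesis .
qed

section \<open>Nonnegative (1,1)-forms\<close>

lemma nonneg_quadratic_imp_linear_coeff_0:
  fixes b d :: real
  assumes "\<And>t. 0 \<le> b * t + d * t\<^sup>2"
  shows "b = 0"
proof (rule ccontr)
  assume "b \<noteq> 0"
  define e where "e = d\<^sup>2 + 1"
  have "e - d > 0"
    unfolding e_def using zero_le_power2[of "d - 1/2"] by (simp add: power2_eq_square algebra_simps)
  have "e > 0"
    unfolding e_def by (simp add: add_nonneg_pos)
  have "b * (- b / e) + d * (- b / e)\<^sup>2 = - (b\<^sup>2 * (e - d) / e\<^sup>2)"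
    using \<open>e > 0\<close> by (simp add: field_simps power2_eq_square)
  moreover have "0 < b\<^sup>2 * (e - d) / e\<^sup>2"
    using \<open>b \<noteq> 0\<close> \<open>e > 0\<close> \<open>e - d > 0\<close> by simp
  ultimately show False
    using assms[of "- b / e"] by simp
qed

lemma bilinear_add: "bilinear f \<Longrightarrow> bilinear g \<Longrightarrow> bilinear (\<lambda>x y. f x y + g x y)"
  unfolding bilinear_def by (auto intro: linear_compose_add)

lemma bilinear_diff: "bilinear f \<Longrightarrow> bilinear g \<Longrightarrow> bilinear (\<lambda>x y. f x y - g x y)"
  unfolding bilinear_def by (auto intro: linear_compose_sub)

lemma bilinear_uminus: "bilinear f \<Longrightarrow> bilinear (\<lambda>x y. - f x y)"
  unfolding bilinear_def by (auto intro: linear_compose_neg)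

lemma bilinear_pullback: "bilinear f \<Longrightarrow> linear p \<Longrightarrow> bilinear (\<lambda>x y. f (p x) (p y))"
  unfolding bilinear_def using linear_compose[of p] by (auto simp: o_def)

lemma real_11_formD:
  assumes "real_11_form I \<alpha>"
  shows "bilinear \<alpha>" "\<alpha> y x = - \<alpha> x y" "\<alpha> (I x) (I y) = \<alpha> x y"
  using assms unfolding real_11_form_def two_form_def by blast+

lemma real_11_formI:
  assumes "bilinear \<alpha>" "\<And>x y. \<alpha> y x = - \<alpha> x y" "\<And>x y. \<alpha> (I x) (I y) = \<alpha> x y"
  shows "real_11_form I \<alpha>"
  using assms unfolding real_11_form_def two_form_def by blast

lemma nonneg_11_formD:
  assumes "nonneg_11_form I \<alpha>"
  shows "real_11_form I \<alpha>" "0 \<le> \<alpha> x (I x)"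
  using assms unfolding nonneg_11_form_def by blast+

lemma real_11_form_add:
  assumes \<alpha>: "real_11_form I \<alpha>" and \<beta>: "real_11_form I \<beta>"
  shows "real_11_form I (\<lambda>x y. \<alpha> x y + \<beta> x y)"
proof (rule real_11_formI)
  show "bilinear (\<lambda>x y. \<alpha> x y + \<beta> x y)"
    using \<alpha> \<beta> by (intro bilinear_add real_11_formD(1))
  show "\<alpha> y x + \<beta> y x = - (\<alpha> x y + \<beta> x y)" for x y
    using real_11_formD(2)[OF \<alpha>, of y x] real_11_formD(2)[OF \<beta>, of y x] by simp
  show "\<alpha> (I x) (I y) + \<beta> (I x) (I y) = \<alpha> x y + \<beta> x y" for x y
    using \<alpha> \<beta> by (simp add: real_11_formD(3))
qed

lemma real_11_form_diff:
  assumes \<alpha>: "real_11_form I \<alpha>" and \<beta>: "real_11_form I \<beta>"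
  shows "real_11_form I (\<lambda>x y. \<alpha> x y - \<beta> x y)"
proof (rule real_11_formI)
  show "bilinear (\<lambda>x y. \<alpha> x y - \<beta> x y)"
    using \<alpha> \<beta> by (intro bilinear_diff real_11_formD(1))
  show "\<alpha> y x - \<beta> y x = - (\<alpha> x y - \<beta> x y)" for x y
    using real_11_formD(2)[OF \<alpha>, of y x] real_11_formD(2)[OF \<beta>, of y x] by simp
  show "\<alpha> (I x) (I y) - \<beta> (I x) (I y) = \<alpha> x y - \<beta> x y" for x y
    using \<alpha> \<beta> by (simp add: real_11_formD(3))
qed

lemma real_11_form_uminus:
  assumes \<alpha>: "real_11_form I \<alpha>"
  shows "real_11_form I (\<lambda>x y. - \<alpha> x y)"
proof (rule real_11_formI)
  show "bilinear (\<lambda>x y. - \<alpha> x y)"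
    using \<alpha> by (intro bilinear_uminus real_11_formD(1))
  show "- \<alpha> y x = - (- \<alpha> x y)" for x y
    using real_11_formD(2)[OF \<alpha>, of y x] by simp
  show "- \<alpha> (I x) (I y) = - \<alpha> x y" for x y
    using \<alpha> by (simp add: real_11_formD(3))
qed

lemma real_11_form_pullback:
  assumes \<alpha>: "real_11_form I \<alpha>" and "linear p" and inv: "\<And>x y. \<alpha> (p (I x)) (p (I y)) = \<alpha> (p x) (p y)"
  shows "real_11_form I (\<lambda>x y. \<alpha> (p x) (p y))"
proof (rule real_11_formI)
  show "bilinear (\<lambda>x y. \<alpha> (p x) (p y))"
    using bilinear_pullback[OF real_11_formD(1)[OF \<alpha>] \<open>linear p\<close>] .
  show "\<alpha> (p y) (p x) = - \<alpha> (p x) (p y)" for x y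
    using \<alpha> by (rule real_11_formD(2))
qed (fact inv)

lemma nonneg_11_form_add:
  assumes "nonneg_11_form I \<alpha>" "nonneg_11_form I \<beta>"
  shows "nonneg_11_form I (\<lambda>x y. \<alpha> x y + \<beta> x y)"
  using assms real_11_form_add[of I \<alpha> \<beta>] unfolding nonneg_11_form_def by (simp add: add_nonneg_nonneg)

lemma nonneg_11_form_diff:
  assumes "real_11_form I \<alpha>" "real_11_form I \<beta>" "\<And>x. \<beta> x (I x) \<le> \<alpha> x (I x)"
  shows "nonneg_11_form I (\<lambda>x y. \<alpha> x y - \<beta> x y)"
  using assms real_11_form_diff[of I \<alpha> \<beta>] unfolding nonneg_11_form_def by simp

lemma nonneg_11_form_pullback:
  assumes "nonneg_11_form I \<alpha>" "linear p" "\<And>y. p (I y) = I (p y)"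
  shows "nonneg_11_form I (\<lambda>x y. \<alpha> (p x) (p y))"
  using assms real_11_form_pullback[of I \<alpha> p] unfolding nonneg_11_form_def
  by (simp add: real_11_formD(3))

lemma nonneg_11_form_anticomm_pullback:
  assumes \<alpha>: "nonneg_11_form I \<alpha>" and "linear J" and anticomm: "\<And>x. J (I x) = - I (J x)"
  shows "nonneg_11_form I (\<lambda>x y. - \<alpha> (J x) (J y))"
proof -
  have \<alpha>': "real_11_form I \<alpha>"
    using \<alpha> by (rule nonneg_11_formD)
  note bilin = real_11_formD(1)[OF \<alpha>']
  have "real_11_form I (\<lambda>x y. \<alpha> (J x) (J y))"
    using \<alpha>' \<open>linear J\<close>
    by (rule real_11_form_pullback) (simp add: anticomm bilinear_lneg[OF bilin] bilinear_rneg[OF bilin] real_11_formD(3)[OF \<alpha>'])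
  then have "real_11_form I (\<lambda>x y. - \<alpha> (J x) (J y))"
    by (rule real_11_form_uminus)
  moreover have "0 \<le> - \<alpha> (J x) (J (I x))" for x
    using nonneg_11_formD(2)[OF \<alpha>, of "J x"] by (simp add: anticomm bilinear_rneg[OF bilin])
  ultimately show ?thesis
    unfolding nonneg_11_form_def by simp
qed

text \<open>The \<open>\<alpha>\<close>-orthogonal projection along \<open>span {e, I e}\<close>; it is the identity when
\<open>\<alpha> e (I e) = 0\<close>, since then both quotients are \<open>0\<close>.\<close>

definition complement_proj :: "('v::real_vector \<Rightarrow> 'v) \<Rightarrow> ('v \<Rightarrow> 'v \<Rightarrow> real) \<Rightarrow> 'v \<Rightarrow> 'v \<Rightarrow> 'v" where
  "complement_proj I \<alpha> e y = y - (\<alpha> y (I e) / \<alpha> e (I e)) *\<^sub>R e + (\<alpha> y e / \<alpha> e (I e)) *\<^sub>R I e"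

locale complex_structure =
  fixes I :: "'v::real_vector \<Rightarrow> 'v"
  assumes linear_I: "linear I" and I_I [simp]: "I (I x) = - x"
begin

lemmas linear_I_simps [simp] = linear_add[OF linear_I] linear_diff[OF linear_I] linear_scale[OF linear_I] linear_neg[OF linear_I]

lemma real_11_form_I_swap:
  assumes "real_11_form I \<alpha>"
  shows "\<alpha> y (I x) = \<alpha> x (I y)"
proof -
  have "\<alpha> y (I x) = - \<alpha> (I x) y"
    using assms by (rule real_11_formD(2))
  also have "\<alpha> (I x) y = \<alpha> (I (I x)) (I y)"
    using assms by (rule real_11_formD(3)[symmetric])
  finally show ?thesis
    by (simp add: bilinear_lneg[OF real_11_formD(1)[OF assms]])
qed

lemma nonneg_11_form_kernel:
  assumes \<alpha>: "nonneg_11_form I \<alpha>" and "\<alpha> e (I e) = 0"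
  shows "\<alpha> e y = 0"
proof -
  have \<alpha>': "real_11_form I \<alpha>"
    using \<alpha> by (rule nonneg_11_formD)
  note bilin = real_11_formD(1)[OF \<alpha>']
  have "2 * \<alpha> e (I z) = 0" for z
  proof (rule nonneg_quadratic_imp_linear_coeff_0)
    fix t :: real
    have "\<alpha> (e + t *\<^sub>R z) (I (e + t *\<^sub>R z)) = 2 * \<alpha> e (I z) * t + \<alpha> z (I z) * t\<^sup>2"
      using \<open>\<alpha> e (I e) = 0\<close> real_11_form_I_swap[OF \<alpha>', of e z]
      by (simp add: bilinear_ladd[OF bilin] bilinear_radd[OF bilin] bilinear_lmul[OF bilin]
          bilinear_rmul[OF bilin] power2_eq_square algebra_simps)
    then show "0 \<le> 2 * \<alpha> e (I z) * t + \<alpha> z (I z) * t\<^sup>2"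
      using nonneg_11_formD(2)[OF \<alpha>] by metis
  qed
  from this[of "- I y"] show ?thesis
    by simp
qed

lemma complement_proj_I:
  assumes "real_11_form I \<alpha>"
  shows "complement_proj I \<alpha> e (I y) = I (complement_proj I \<alpha> e y)"
proof -
  note bilin = real_11_formD(1)[OF assms]
  have "\<alpha> (I y) (I e) = \<alpha> y e" "\<alpha> (I y) e = - \<alpha> y (I e)"
    using real_11_formD(3)[OF assms, of y e] real_11_formD(3)[OF assms, of "I y" e]
    by (simp_all add: bilinear_lneg[OF bilin] bilinear_rneg[OF bilin])
  then show ?thesis
    unfolding complement_proj_def by (simp add: algebra_simps)
qed

lemma linear_complement_proj:
  assumes "real_11_form I \<alpha>"
  shows "linear (complement_proj I \<alpha> e)"
  using real_11_formD(1)[OF assms]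
  by (intro linearI) (simp_all add: complement_proj_def bilinear_ladd bilinear_lmul algebra_simps add_divide_distrib)

lemma complement_proj_eq:
  "complement_proj I \<alpha> e y = y + (- (\<alpha> y (I e) / \<alpha> e (I e))) *\<^sub>R e + (\<alpha> y e / \<alpha> e (I e)) *\<^sub>R I e"
  unfolding complement_proj_def by simp

lemma complement_proj_orth:
  assumes "real_11_form I \<alpha>" "\<alpha> e (I e) \<noteq> 0"
  shows "\<alpha> e (complement_proj I \<alpha> e y) = 0"
proof -
  note bilin = real_11_formD(1)[OF assms(1)]
  have "\<alpha> e e = 0" "\<alpha> e y = - \<alpha> y e"
    using real_11_formD(2)[OF assms(1), of e e] real_11_formD(2)[OF assms(1), of e y] by simp_all
  then show ?thesis
    using assms(2) unfolding complement_proj_def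
    by (simp add: bilinear_radd[OF bilin] bilinear_rsub[OF bilin] bilinear_rmul[OF bilin])
qed

lemma complement_proj_diag:
  assumes "real_11_form I \<alpha>" "\<alpha> e (I e) \<noteq> 0"
  defines "p \<equiv> complement_proj I \<alpha> e"
  shows "\<alpha> (p x) (I (p x)) = \<alpha> x (I x) - ((\<alpha> x (I e))\<^sup>2 + (\<alpha> x e)\<^sup>2) / \<alpha> e (I e)"
proof -
  note bilin = real_11_formD(1)[OF assms(1)]
  define A where "A = \<alpha> e (I e)"
  define s1 where "s1 = \<alpha> x (I e)"
  define s2 where "s2 = \<alpha> x e"
  have "\<alpha> e (I x) = s1" "\<alpha> e x = - s2" "\<alpha> (I e) (I x) = - s2" "\<alpha> (I e) e = - A"
    "\<alpha> (I e) (I e) = 0" "\<alpha> e e = 0"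
    using real_11_form_I_swap[OF assms(1), of e x] real_11_formD(2)[OF assms(1), of e x]
      real_11_formD(3)[OF assms(1), of e x] real_11_formD(2)[OF assms(1), of "I e" e]
      real_11_formD(2)[OF assms(1), of "I e" "I e"] real_11_formD(2)[OF assms(1), of e e]
    by (simp_all add: s1_def s2_def A_def)
  moreover have "p x = x - (s1 / A) *\<^sub>R e + (s2 / A) *\<^sub>R I e" "I (p x) = I x - (s1 / A) *\<^sub>R I e - (s2 / A) *\<^sub>R e"
    unfolding p_def complement_proj_def s1_def s2_def A_def by simp_all
  ultimately have "\<alpha> (p x) (I (p x)) = \<alpha> x (I x) - 2 * (s1 / A) * s1 - 2 * (s2 / A) * s2 + (s1 / A)\<^sup>2 * A + (s2 / A)\<^sup>2 * A"
    by (simp only:) (simp add: bilinear_ladd[OF bilin] bilinear_radd[OF bilin] bilinear_lsub[OF bilin] bilinear_rsub[OF bilin]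
        bilinear_lmul[OF bilin] bilinear_rmul[OF bilin] s1_def[symmetric] s2_def[symmetric] A_def[symmetric]
        power2_eq_square algebra_simps)
  also have "\<dots> = \<alpha> x (I x) - (s1\<^sup>2 + s2\<^sup>2) / A"
    using assms(2) unfolding A_def by (simp add: field_simps power2_eq_square)
  finally show ?thesis
    unfolding s1_def s2_def A_def .
qed

lemma complement_proj_diag_le:
  assumes "real_11_form I \<alpha>" "\<alpha> e (I e) > 0"
  shows "\<alpha> (complement_proj I \<alpha> e x) (I (complement_proj I \<alpha> e x)) \<le> \<alpha> x (I x)"
  using complement_proj_diag[OF assms(1)] assms(2) by simp

lemma nonneg_11_form_complement_proj:
  assumes "nonneg_11_form I \<alpha>"
  shows "nonneg_11_form I (\<lambda>x y. \<alpha> (complement_proj I \<alpha> e x) (complement_proj I \<alpha> e y))"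
  using assms linear_complement_proj[OF nonneg_11_formD(1)[OF assms]] complement_proj_I[OF nonneg_11_formD(1)[OF assms]]
  by (rule nonneg_11_form_pullback)

lemma nonneg_11_form_diff_complement_proj:
  assumes \<alpha>: "nonneg_11_form I \<alpha>" and \<sigma>: "real_11_form I \<sigma>"
    and le: "\<And>x. \<alpha> x (I x) \<le> \<sigma> x (I x)" and e: "\<alpha> e (I e) > 0"
  shows "nonneg_11_form I (\<lambda>x y. \<sigma> x y - \<alpha> (complement_proj I \<alpha> e x) (complement_proj I \<alpha> e y))"
proof (rule nonneg_11_form_diff[OF \<sigma> nonneg_11_formD(1)[OF nonneg_11_form_complement_proj[OF \<alpha>]]])
  show "\<alpha> (complement_proj I \<alpha> e x) (complement_proj I \<alpha> e (I x)) \<le> \<sigma> x (I x)" for x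
    using complement_proj_diag_le[OF nonneg_11_formD(1)[OF \<alpha>] e, of x] le[of x]
      complement_proj_I[OF nonneg_11_formD(1)[OF \<alpha>]] by simp
qed

section \<open>Top powers on complex frames\<close>

lemma wedge_pow_complex_frame_complement_proj:
  assumes "bilinear \<omega>" "real_11_form I \<beta>"
  shows "wedge_pow \<omega> (Suc m) (complex_frame I ((complement_proj I \<beta> e \<circ> w)(m := e)))
       = wedge_pow \<omega> (Suc m) (complex_frame I (w(m := e)))"
proof (rule wedge_pow_complex_frame_shear[where c = "\<lambda>y. - (\<beta> y (I e) / \<beta> e (I e))" and d = "\<lambda>y. \<beta> y e / \<beta> e (I e)"])
  show "complement_proj I \<beta> e (I y) = I (complement_proj I \<beta> e y)" for y
    using assms(2) by (rule complement_proj_I)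
qed (simp_all add: assms(1) complement_proj_eq)

lemma wedge_pow_complex_frame_Suc:
  assumes \<alpha>: "real_11_form I \<alpha>" and e: "\<alpha> e (I e) \<noteq> 0"
  shows "wedge_pow \<alpha> (Suc m) (complex_frame I (w(m := e)))
       = real (Suc m) * \<alpha> e (I e) * wedge_pow \<alpha> m (complex_frame I (complement_proj I \<alpha> e \<circ> w))"
proof -
  let ?p = "complement_proj I \<alpha> e"
  let ?u = "complex_frame I ((?p \<circ> w)(m := e))"
  have p_I: "?p (I y) = I (?p y)" for y
    using \<alpha> by (rule complement_proj_I)
  have u_below: "?u j = ?p (complex_frame I w j)" if "j < 2*m" for j
    using that by (simp add: complex_frame_upd_below complex_frame_comp p_I)
  have "wedge_pow \<alpha> (Suc m) (complex_frame I (w(m := e))) = wedge_pow \<alpha> (Suc m) ?u"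
    using wedge_pow_complex_frame_complement_proj[OF real_11_formD(1)[OF \<alpha>] \<alpha>] by simp
  also have "\<dots> = real (Suc m) * \<alpha> (?u (2*m)) (?u (Suc (2*m))) * wedge_pow \<alpha> m ?u"
  proof (rule wedge_pow_Suc_orth_last)
    show "\<alpha> y x = - \<alpha> x y" for x y
      using \<alpha> by (rule real_11_formD(2))
    show "\<alpha> (?u (2*m)) (?u j) = 0" if "j < 2*m" for j
      using that complement_proj_orth[OF \<alpha> e] by (simp add: u_below)
  qed
  also have "wedge_pow \<alpha> m ?u = wedge_pow \<alpha> m (complex_frame I (?p \<circ> w))"
    by (rule wedge_pow_cong) (simp add: complex_frame_upd_below)
  finally show ?thesis
    by (simp only: complex_frame_last fun_upd_same)
qed

lemma wedge_pow_complex_frame_Suc_kernel: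
  assumes "nonneg_11_form I \<alpha>" and "\<alpha> (w m) (I (w m)) = 0"
  shows "wedge_pow \<alpha> (Suc m) (complex_frame I w) = 0"
proof -
  have "wedge_pow \<alpha> (Suc m) (complex_frame I w)
      = real (Suc m) * \<alpha> (complex_frame I w (2*m)) (complex_frame I w (Suc (2*m))) * wedge_pow \<alpha> m (complex_frame I w)"
  proof (rule wedge_pow_Suc_orth_last)
    show "\<alpha> y x = - \<alpha> x y" for x y
      using nonneg_11_formD(1)[OF assms(1)] by (rule real_11_formD(2))
    show "\<alpha> (complex_frame I w (2*m)) (complex_frame I w j) = 0" for j
      using nonneg_11_form_kernel[OF assms] by simp
  qed
  then show ?thesis
    using assms(2) by simp
qed

lemma wedge_pow_complex_frame_Suc_pullback:
  assumes \<alpha>: "real_11_form I \<alpha>" and \<beta>: "real_11_form I \<beta>" and "\<alpha> (w m) (I (w m)) \<noteq> 0"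
  defines "p \<equiv> complement_proj I \<alpha> (w m)" and "q \<equiv> complement_proj I \<beta> (w m)"
  shows "wedge_pow \<alpha> (Suc m) (complex_frame I w)
       = real (Suc m) * \<alpha> (w m) (I (w m)) * wedge_pow (\<lambda>x y. \<alpha> (p x) (p y)) m (complex_frame I (q \<circ> w))"
proof -
  have "wedge_pow \<alpha> (Suc m) (complex_frame I w) = wedge_pow \<alpha> (Suc m) (complex_frame I ((q \<circ> w)(m := w m)))"
    unfolding q_def using wedge_pow_complex_frame_complement_proj[OF real_11_formD(1)[OF \<alpha>] \<beta>, where e = "w m" and w = w]
    by simp
  also have "\<dots> = real (Suc m) * \<alpha> (w m) (I (w m)) * wedge_pow \<alpha> m (complex_frame I (p \<circ> (q \<circ> w)))"
    unfolding p_def using \<alpha> assms(3) by (rule wedge_pow_complex_frame_Suc)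
  also have "wedge_pow \<alpha> m (complex_frame I (p \<circ> (q \<circ> w))) = wedge_pow (\<lambda>x y. \<alpha> (p x) (p y)) m (complex_frame I (q \<circ> w))"
    unfolding p_def using complement_proj_I[OF \<alpha>] by (intro wedge_pow_pullback_complex_frame[symmetric])
  finally show ?thesis .
qed

lemma wedge_pow_complex_frame_nonneg:
  assumes "nonneg_11_form I \<alpha>"
  shows "0 \<le> wedge_pow \<alpha> m (complex_frame I w)"
  using assms
proof (induction m arbitrary: \<alpha> w)
  case 0
  then show ?case by simp
next
  case (Suc m)
  have \<alpha>: "real_11_form I \<alpha>" and "0 \<le> \<alpha> (w m) (I (w m))"
    using Suc.prems by (rule nonneg_11_formD)+
  then consider "\<alpha> (w m) (I (w m)) = 0" | "\<alpha> (w m) (I (w m)) > 0"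
    by linarith
  then show ?case
  proof cases
    case 1
    then show ?thesis
      using wedge_pow_complex_frame_Suc_kernel[OF Suc.prems] by simp
  next
    case 2
    then show ?thesis
      using wedge_pow_complex_frame_Suc_pullback[OF \<alpha> \<alpha>, of w m]
        Suc.IH[OF nonneg_11_form_complement_proj[OF Suc.prems]] by simp
  qed
qed

lemma wedge_pow_complex_frame_mono:
  assumes "nonneg_11_form I \<alpha>" "nonneg_11_form I \<gamma>"
  shows "wedge_pow \<alpha> m (complex_frame I w) \<le> wedge_pow (\<lambda>x y. \<alpha> x y + \<gamma> x y) m (complex_frame I w)"
  using assms
proof (induction m arbitrary: \<alpha> \<gamma> w)
  case 0
  then show ?case by simp
next
  case (Suc m)
  define \<sigma> where "\<sigma> = (\<lambda>x y. \<alpha> x y + \<gamma> x y)"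
  have \<sigma>_nonneg: "nonneg_11_form I \<sigma>"
    unfolding \<sigma>_def using Suc.prems by (rule nonneg_11_form_add)
  have \<alpha>: "real_11_form I \<alpha>" and \<sigma>: "real_11_form I \<sigma>"
    using Suc.prems(1) \<sigma>_nonneg by (simp_all add: nonneg_11_formD(1))
  have \<alpha>_le_\<sigma>: "\<alpha> x (I x) \<le> \<sigma> x (I x)" for x
    using nonneg_11_formD(2)[OF Suc.prems(2)] by (simp add: \<sigma>_def)
  consider "\<alpha> (w m) (I (w m)) = 0" | "\<alpha> (w m) (I (w m)) > 0"
    using nonneg_11_formD(2)[OF Suc.prems(1), of "w m"] by linarith
  then show ?case
  proof cases
    case 1
    then show ?thesis
      using wedge_pow_complex_frame_Suc_kernel[OF Suc.prems(1)] wedge_pow_complex_frame_nonneg[OF \<sigma>_nonneg]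
      by (simp add: \<sigma>_def)
  next
    case 2
    let ?p = "complement_proj I \<alpha> (w m)" and ?q = "complement_proj I \<sigma> (w m)"
    let ?\<alpha>p = "\<lambda>x y. \<alpha> (?p x) (?p y)"
    have IH: "wedge_pow ?\<alpha>p m (complex_frame I (?q \<circ> w)) \<le> wedge_pow \<sigma> m (complex_frame I (?q \<circ> w))"
      using Suc.IH[OF nonneg_11_form_complement_proj[OF Suc.prems(1), where e = "w m"]
          nonneg_11_form_diff_complement_proj[OF Suc.prems(1) \<sigma> \<alpha>_le_\<sigma> 2]] by simp
    have "wedge_pow \<alpha> (Suc m) (complex_frame I w)
        = real (Suc m) * \<alpha> (w m) (I (w m)) * wedge_pow ?\<alpha>p m (complex_frame I (?q \<circ> w))"
      using \<alpha> \<sigma> 2 by (intro wedge_pow_complex_frame_Suc_pullback) simp_all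
    also have "\<dots> \<le> real (Suc m) * \<sigma> (w m) (I (w m)) * wedge_pow \<sigma> m (complex_frame I (?q \<circ> w))"
      using IH 2 \<alpha>_le_\<sigma>[of "w m"] wedge_pow_complex_frame_nonneg[OF nonneg_11_form_complement_proj[OF Suc.prems(1)]]
      by (intro mult_mono) auto
    also have "\<dots> = wedge_pow \<sigma> (Suc m) (complex_frame I w)"
      using wedge_pow_complex_frame_Suc[OF \<sigma>, of "w m" m w] 2 \<alpha>_le_\<sigma>[of "w m"] by simp
    finally show ?thesis
      by (simp add: \<sigma>_def)
  qed
qed

end

lemma hypercomplex_structure_complex_structure:
  "hypercomplex_structure I J K \<Longrightarrow> complex_structure I"
  unfolding hypercomplex_structure_def complex_structure_def by blast

lemma hypercomplex_structure_anticomm: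
  assumes "hypercomplex_structure I J K"
  shows "J (I x) = - I (J x)"
proof -
  have lin: "linear I" "linear J" "linear K"
    and II: "I (I y) = - y" and JJ: "J (J y) = - y" and KK: "K (K y) = - y" and KJI: "K (J (I y)) = - y" for y
    using assms unfolding hypercomplex_structure_def by blast+
  have "K x = J (I x)"
    using KK[of "J (I x)"] KJI[of x] linear_neg[OF lin(3)] by simp
  moreover have "J (I (- I (J x))) = - x"
    using II JJ linear_neg[OF lin(1)] linear_neg[OF lin(2)] by simp
  then have "K x = - I (J x)"
    using KJI[of "- I (J x)"] linear_neg[OF lin(3)] by (metis minus_minus)
  ultimately show ?thesis
    by simp
qed

theorem lemma3p1:
  fixes I J K :: "'v::euclidean_space \<Rightarrow> 'v"
    and \<alpha> :: "'v \<Rightarrow> 'v \<Rightarrow> real"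
    and n :: nat
  assumes "hypercomplex_structure I J K"
    and "DIM('v) = 4 * n"
    and "nonneg_11_form I \<alpha>"
  shows "top_form_ge I (wedge_pow (\<lambda>x y. \<alpha> x y - \<alpha> (J x) (J y)) (2 * n)) (wedge_pow \<alpha> (2 * n))"
proof -
  interpret complex_structure I
    using assms(1) by (rule hypercomplex_structure_complex_structure)
  have "linear J"
    using assms(1) unfolding hypercomplex_structure_def by blast
  then have "nonneg_11_form I (\<lambda>x y. - \<alpha> (J x) (J y))"
    using assms(3) hypercomplex_structure_anticomm[OF assms(1)] by (intro nonneg_11_form_anticomm_pullback)
  then have "wedge_pow \<alpha> (2 * n) (complex_frame I v)
      \<le> wedge_pow (\<lambda>x y. \<alpha> x y - \<alpha> (J x) (J y)) (2 * n) (complex_frame I v)" for v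
    using wedge_pow_complex_frame_mono[OF assms(3)] by fastforce
  then show ?thesis
    unfolding top_form_ge_def by simp
qed

end
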